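(* For positive integers $n,k$, $F(n,k)=k(n-1)$.
   Context: Graphs are finite, loopless, possibly with multiple edges. $\kappa'(G)$ is the edge connectivity and $\overline{\kappa'}(G)=\max\{\kappa'(H): H \text{ a subgraph of } G\}$. $F(n,k)$ denotes the maximum number of edges of a graph $G$ on $n$ vertices with $\overline{\kappa'}(G)\le k$. *)

theory Defs
  imports Main "HOL-Library.Multiset"
begin

definition multigraph :: "'a set \<Rightarrow> 'a set multiset \<Rightarrow> bool" where
  "multigraph V E \<longleftrightarrow> finite V \<and>
     (\<forall>e \<in># E. \<exists>u v. e = {u, v} \<and> u \<noteq> v \<and> u \<in> V \<and> v \<in> V)"

definition adj :: "'a set multiset \<Rightarrow> ('a \<times> 'a) set" where
  "adj E = {(u, v). {u, v} \<in># E}"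

definition connected_mg :: "'a set \<Rightarrow> 'a set multiset \<Rightarrow> bool" where
  "connected_mg V E \<longleftrightarrow> (\<forall>u \<in> V. \<forall>v \<in> V. (u, v) \<in> (adj E)\<^sup>*)"

definition edge_conn :: "'a set \<Rightarrow> 'a set multiset \<Rightarrow> nat" where
  "edge_conn V E = (if card V \<le> 1 then 0
     else (LEAST k. \<exists>F. F \<subseteq># E \<and> size F = k \<and> \<not> connected_mg V (E - F)))"

definition subgraph :: "'a set \<Rightarrow> 'a set multiset \<Rightarrow> 'a set \<Rightarrow> 'a set multiset \<Rightarrow> bool" where
  "subgraph V' E' V E \<longleftrightarrow> V' \<subseteq> V \<and> E' \<subseteq># E \<and> multigraph V' E'"

definition max_edge_conn :: "'a set \<Rightarrow> 'a set multiset \<Rightarrow> nat" where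
  "max_edge_conn V E = Max {edge_conn V' E' | V' E'. subgraph V' E' V E}"

text \<open>F(n,k): maximum number of edges of a multigraph on n vertices with
  max_edge_conn at most k (vertices taken from nat; the notion is invariant
  under renaming vertices).\<close>
definition F :: "nat \<Rightarrow> nat \<Rightarrow> nat" where
  "F n k = Max {size E | (V :: nat set) E. multigraph V E \<and> card V = n \<and> max_edge_conn V E \<le> k}"

end

theory Submission
  imports Defs
begin

text \<open>Upper bound, by induction on the number of vertices: a minimum cut of G has at most
  k edges and splits G into two smaller graphs on complementary vertex sets, each again
  without a subgraph of edge connectivity above k; the bound k(|A|-1) + k(|B|-1) + k
  for the two sides and the cut adds up to k(|V|-1). Lower bound: the star on n vertices
  with every edge taken k times has k(n-1) edges, and every subgraph with at least two
  vertices contains a leaf of degree at most k, whose incident edges form a cut.\<close>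

lemma card_gt_1_obtains_other:
  assumes "1 < card V"
  obtains v where "v \<in> V" "v \<noteq> u"
proof (rule ccontr)
  assume "\<not> thesis"
  with that have "V \<subseteq> {u}" by blast
  then have "card V \<le> 1" using card_mono[of "{u}" V] by simp
  with assms(1) show False by simp
qed

lemma card_gt_1_not_connected_mg_empty:
  assumes "1 < card V"
  shows "\<not> connected_mg V {#}"
proof -
  have "V \<noteq> {}" using assms by auto
  then obtain u where "u \<in> V" by blast
  obtain v where "v \<in> V" "v \<noteq> u" by (rule card_gt_1_obtains_other[OF assms])
  moreover have "(u, v) \<notin> (adj {#})\<^sup>*" using \<open>v \<noteq> u\<close> by (simp add: adj_def)
  ultimately show ?thesis unfolding connected_mg_def using \<open>u \<in> V\<close> by blast
qed

lemma multigraph_card_le_1_no_edges: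
  assumes "multigraph V E" "card V \<le> 1"
  shows "E = {#}"
proof (rule ccontr)
  assume "E \<noteq> {#}"
  then obtain e where "e \<in># E" by blast
  then obtain u v where "u \<noteq> v" "u \<in> V" "v \<in> V" using assms(1) unfolding multigraph_def by blast
  moreover have "finite V" using assms(1) unfolding multigraph_def by blast
  ultimately have "card {u, v} \<le> card V" by (intro card_mono) auto
  with \<open>u \<noteq> v\<close> assms(2) show False by simp
qed

lemma edge_conn_le_cut:
  assumes "C \<subseteq># E" "\<not> connected_mg V (E - C)"
  shows "edge_conn V E \<le> size C"
proof -
  have "(LEAST k. \<exists>F. F \<subseteq># E \<and> size F = k \<and> \<not> connected_mg V (E - F)) \<le> size C"
    using assms by (intro Least_le exI[of _ C]) simp
  then show ?thesis unfolding edge_conn_def by simp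
qed

lemma edge_conn_le_size: "edge_conn V E \<le> size E"
proof (cases "card V \<le> 1")
  case True
  then show ?thesis unfolding edge_conn_def by simp
next
  case False
  then have "\<not> connected_mg V (E - E)"
    using card_gt_1_not_connected_mg_empty[of V] by simp
  then show ?thesis by (rule edge_conn_le_cut[rotated]) simp
qed

lemma edge_conn_minimum_cut:
  assumes "1 < card V"
  obtains C where "C \<subseteq># E" "size C = edge_conn V E" "\<not> connected_mg V (E - C)"
proof -
  have "\<exists>k. \<exists>F. F \<subseteq># E \<and> size F = k \<and> \<not> connected_mg V (E - F)"
    using card_gt_1_not_connected_mg_empty[OF assms] by (intro exI[of _ "size E"] exI[of _ E]) simp
  from LeastI_ex[OF this] assms that show thesis
    unfolding edge_conn_def by auto
qed

lemma edge_conn_le_degree: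
  assumes "m \<in> V"
  shows "edge_conn V E \<le> size (filter_mset (\<lambda>e. m \<in> e) E)"
proof (cases "card V \<le> 1")
  case True
  then show ?thesis unfolding edge_conn_def by simp
next
  case False
  obtain w where w: "w \<in> V" "w \<noteq> m"
    by (rule card_gt_1_obtains_other[of V m]) (use False in linarith)
  let ?F = "filter_mset (\<lambda>e. m \<in> e) E"
  have rest: "E - ?F = filter_mset (\<lambda>e. m \<notin> e) E"
    by (metis add_diff_cancel_left' multiset_partition)
  have "(m, w) \<notin> (adj (E - ?F))\<^sup>*"
  proof
    assume "(m, w) \<in> (adj (E - ?F))\<^sup>*"
    then show False
    proof (cases rule: converse_rtranclE)
      case (step y)
      then show False unfolding adj_def rest by simp
    qed (use w in simp)
  qed
  then have "\<not> connected_mg V (E - ?F)" unfolding connected_mg_def using assms w by blast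
  then show ?thesis by (intro edge_conn_le_cut) simp_all
qed

lemma subgraph_refl: "multigraph V E \<Longrightarrow> subgraph V E V E"
  unfolding subgraph_def by simp

lemma subgraph_trans:
  "subgraph V'' E'' V' E' \<Longrightarrow> subgraph V' E' V E \<Longrightarrow> subgraph V'' E'' V E"
  unfolding subgraph_def by (meson order_trans subset_mset.order_trans)

lemma multigraph_restrict:
  assumes "multigraph V E" "W \<subseteq> V"
  shows "multigraph W (filter_mset (\<lambda>e. e \<subseteq> W) E)"
  using assms finite_subset unfolding multigraph_def by fastforce

lemma finite_edge_conns_of_subgraphs:
  "finite {edge_conn V' E' | V' E'. subgraph V' E' V E}"
proof (rule finite_subset)
  show "{edge_conn V' E' | V' E'. subgraph V' E' V E} \<subseteq> {..size E}"
  proof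
    fix x assume "x \<in> {edge_conn V' E' | V' E'. subgraph V' E' V E}"
    then obtain V' E' where "x = edge_conn V' E'" "E' \<subseteq># E" unfolding subgraph_def by blast
    then show "x \<in> {..size E}" using edge_conn_le_size[of V' E'] size_mset_mono[of E' E] by simp
  qed
qed simp

lemma max_edge_conn_le_iff:
  "max_edge_conn V E \<le> k \<longleftrightarrow> (\<forall>V' E'. subgraph V' E' V E \<longrightarrow> edge_conn V' E' \<le> k)"
proof -
  have "subgraph {} {#} V E" unfolding subgraph_def multigraph_def by simp
  then have nonempty: "{edge_conn V' E' | V' E'. subgraph V' E' V E} \<noteq> {}" by blast
  show ?thesis
    unfolding max_edge_conn_def Max_le_iff[OF finite_edge_conns_of_subgraphs nonempty] by blast
qed

lemma max_edge_conn_subgraph_le: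
  "subgraph V' E' V E \<Longrightarrow> max_edge_conn V E \<le> k \<Longrightarrow> max_edge_conn V' E' \<le> k"
  unfolding max_edge_conn_le_iff by (meson subgraph_trans)

lemma disconnected_mg_split:
  assumes "multigraph V G" "\<not> connected_mg V G"
  obtains A where "A \<subseteq> V" "A \<noteq> {}" "A \<noteq> V" "\<forall>e \<in># G. e \<subseteq> A \<or> e \<subseteq> V - A"
proof -
  obtain a b where ab: "a \<in> V" "b \<in> V" "(a, b) \<notin> (adj G)\<^sup>*"
    using assms(2) unfolding connected_mg_def by blast
  define A where "A = {w \<in> V. (a, w) \<in> (adj G)\<^sup>*}"
  have closed: "y \<in> A" if "x \<in> A" "{x, y} \<in># G" "y \<in> V" for x y
  proof -
    have "(x, y) \<in> adj G" using that(2) unfolding adj_def by simp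
    with that(1) have "(a, y) \<in> (adj G)\<^sup>*" unfolding A_def by (blast intro: rtrancl_into_rtrancl)
    with that(3) show ?thesis unfolding A_def by simp
  qed
  have "e \<subseteq> A \<or> e \<subseteq> V - A" if "e \<in># G" for e
  proof -
    obtain x y where e: "e = {x, y}" "x \<in> V" "y \<in> V"
      using assms(1) \<open>e \<in># G\<close> unfolding multigraph_def by blast
    have "{y, x} \<in># G" using \<open>e \<in># G\<close> unfolding e by (simp add: insert_commute)
    then have "x \<in> A \<longleftrightarrow> y \<in> A" using closed \<open>e \<in># G\<close> e by blast
    then show ?thesis using e by blast
  qed
  moreover have "a \<in> A" "b \<notin> A" "A \<subseteq> V" unfolding A_def using ab by auto
  ultimately show thesis using that ab(2) by blast
qed

lemma size_le_if_max_edge_conn_le: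
  assumes "multigraph V E" "max_edge_conn V E \<le> k"
  shows "size E \<le> k * (card V - 1)"
  using assms
proof (induction "card V" arbitrary: V E rule: less_induct)
  case less
  have fin: "finite V" using less.prems(1) unfolding multigraph_def by blast
  show ?case
  proof (cases "card V \<le> 1")
    case True
    then show ?thesis using multigraph_card_le_1_no_edges[OF less.prems(1)] by simp
  next
    case False
    then obtain C where C: "C \<subseteq># E" "size C = edge_conn V E" "\<not> connected_mg V (E - C)"
      using edge_conn_minimum_cut by (metis not_le)
    have "size C \<le> k"
      using C(2) less.prems subgraph_refl max_edge_conn_le_iff by metis
    define G where "G = E - C"
    have "multigraph V G"
      using less.prems(1) unfolding G_def multigraph_def by (meson in_diffD)
    then obtain A where A: "A \<subseteq> V" "A \<noteq> {}" "A \<noteq> V" "\<forall>e \<in># G. e \<subseteq> A \<or> e \<subseteq> V - A"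
      using disconnected_mg_split C(3) unfolding G_def by blast
    define B where "B = V - A"
    have "E = G + C" unfolding G_def using C(1) by simp
    then have "G \<subseteq># E" by simp
    then have sub_E: "subgraph W (filter_mset (\<lambda>e. e \<subseteq> W) G) V E" if "W \<subseteq> V" for W
      unfolding subgraph_def using that multigraph_restrict[OF \<open>multigraph V G\<close> that]
        subset_mset.order_trans[OF multiset_filter_subset] by simp
    have bound: "size (filter_mset (\<lambda>e. e \<subseteq> W) G) \<le> k * (card W - 1)"
      if "W \<subseteq> V" "W \<noteq> V" for W
      using less.hyps[OF psubset_card_mono[OF fin] multigraph_restrict[OF \<open>multigraph V G\<close>]]
        max_edge_conn_subgraph_le[OF sub_E less.prems(2)] that by blast
    have edges_nonempty: "e \<noteq> {}" if "e \<in># G" for e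
      using \<open>multigraph V G\<close> that unfolding multigraph_def by blast
    have "filter_mset (\<lambda>e. \<not> e \<subseteq> A) G = filter_mset (\<lambda>e. e \<subseteq> B) G"
    proof (rule filter_mset_cong[OF refl])
      fix e assume "e \<in># G"
      then show "\<not> e \<subseteq> A \<longleftrightarrow> e \<subseteq> B"
        using A(4) edges_nonempty[of e] unfolding B_def by blast
    qed
    then have "size E = size (filter_mset (\<lambda>e. e \<subseteq> A) G) + size (filter_mset (\<lambda>e. e \<subseteq> B) G) + size C"
      using \<open>E = G + C\<close> multiset_partition[of G "\<lambda>e. e \<subseteq> A"] by (metis size_union)
    also have "\<dots> \<le> k * (card A - 1) + k * (card B - 1) + k"
      using bound[of A] bound[of B] A \<open>size C \<le> k\<close> unfolding B_def by (intro add_mono) auto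
    also have "\<dots> = k * (card V - 1)"
    proof -
      have "finite A" using A(1) fin by (rule finite_subset)
      have "card A + card B = card V"
        unfolding B_def using card_Diff_subset[OF \<open>finite A\<close> A(1)] card_mono[OF fin A(1)] by simp
      moreover have "card A > 0" using A(2) \<open>finite A\<close> by (simp add: card_gt_0_iff)
      moreover have "card B > 0" using A(1,3) fin unfolding B_def by (auto simp: card_gt_0_iff)
      ultimately have "card V - 1 = (card A - 1) + (card B - 1) + 1" by arith
      then show ?thesis by (simp add: distrib_left)
    qed
    finally show ?thesis .
  qed
qed

definition multistar :: "nat \<Rightarrow> nat \<Rightarrow> nat set multiset" where
  "multistar n k = (\<Sum>i\<in>{1..<n}. replicate_mset k {0, i})"

lemma filter_mset_sum: "filter_mset P (\<Sum>i\<in>A. f i) = (\<Sum>i\<in>A. filter_mset P (f i))"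
  by (induction A rule: infinite_finite_induct) auto

lemma filter_mset_replicate_mset:
  "filter_mset P (replicate_mset k x) = (if P x then replicate_mset k x else {#})"
  by (induction k) auto

lemma multigraph_multistar: "multigraph {0..<n} (multistar n k)"
  unfolding multigraph_def
proof (intro conjI ballI)
  fix e assume "e \<in># multistar n k"
  then obtain i where "i \<in> {1..<n}" "e = {0, i}"
    by (auto simp: multistar_def set_mset_sum split: if_splits)
  then show "\<exists>u v. e = {u, v} \<and> u \<noteq> v \<and> u \<in> {0..<n} \<and> v \<in> {0..<n}"
    by (intro exI[of _ 0] exI[of _ i]) auto
qed simp

lemma size_multistar: "size (multistar n k) = k * (n - 1)"
  unfolding multistar_def by simp

lemma degree_multistar:
  assumes "m \<in> {1..<n}"
  shows "size (filter_mset (\<lambda>e. m \<in> e) (multistar n k)) = k"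
proof -
  have "filter_mset (\<lambda>e. m \<in> e) (multistar n k)
      = (\<Sum>i\<in>{1..<n}. if i = m then replicate_mset k {0, m} else {#})"
    unfolding multistar_def filter_mset_sum filter_mset_replicate_mset
    using assms by (intro sum.cong) auto
  then show ?thesis using assms by simp
qed

lemma max_edge_conn_multistar: "max_edge_conn {0..<n} (multistar n k) \<le> k"
  unfolding max_edge_conn_le_iff
proof (intro allI impI)
  fix V E assume "subgraph V E {0..<n} (multistar n k)"
  then have V: "V \<subseteq> {0..<n}" and E: "E \<subseteq># multistar n k" unfolding subgraph_def by auto
  show "edge_conn V E \<le> k"
  proof (cases "card V \<le> 1")
    case True
    then show ?thesis unfolding edge_conn_def by simp
  next
    case False
    obtain m where m: "m \<in> V" "m \<noteq> 0"
      by (rule card_gt_1_obtains_other[of V 0]) (use False in linarith)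
    have "edge_conn V E \<le> size (filter_mset (\<lambda>e. m \<in> e) E)"
      by (rule edge_conn_le_degree[OF m(1)])
    also have "\<dots> \<le> size (filter_mset (\<lambda>e. m \<in> e) (multistar n k))"
      by (rule size_mset_mono[OF multiset_filter_mono[OF E]])
    also have "\<dots> = k" using m V by (intro degree_multistar) auto
    finally show ?thesis .
  qed
qed

theorem corollary3p6:
  fixes n k :: nat
  assumes "n \<ge> 1" and "k \<ge> 1"
  shows "F n k = k * (n - 1)"
proof -
  let ?S = "{size E | (V :: nat set) E. multigraph V E \<and> card V = n \<and> max_edge_conn V E \<le> k}"
  have bounded: "s \<le> k * (n - 1)" if "s \<in> ?S" for s
  proof -
    from that obtain V :: "nat set" and E
      where "s = size E" "multigraph V E" "card V = n" "max_edge_conn V E \<le> k" by blast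
    then show ?thesis using size_le_if_max_edge_conn_le[of V E k] by simp
  qed
  have finite: "finite ?S" by (rule finite_subset[of _ "{..k * (n - 1)}"]) (use bounded in auto)
  have attained: "k * (n - 1) \<in> ?S"
    using multigraph_multistar[of n k] size_multistar[of n k] max_edge_conn_multistar[of n k]
    by (intro CollectI exI[of _ "{0..<n}"] exI[of _ "multistar n k"]) simp
  show ?thesis unfolding F_def by (rule Max_eqI[OF finite bounded attained])
qed

end
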